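(* Let $X\in L_2^p(P)$ be centered with $\Sigma=\mathrm{Cov}(X)$, let $\varepsilon\in L_2^q(P)$ be centered with $V=\mathrm{Cov}(\varepsilon)$ and stochastically independent of $X$, let $Z\in\mathbb R^{q\times p}$ and $Y=ZX+\varepsilon$. Put $B=Z\Sigma Z^\tau$, $C=B+V$, $K=\Sigma Z^\tau C^-$ and $Z^\Sigma=\Sigma Z^\tau B^-$. Then, regardless of the ranks of $Z$ or $B$, $\mathrm{oP}(\varepsilon\,|\,Y)=(I_q-ZK)Y$ and $$\mathrm{oP}(X\,|\,Y)=Z^\Sigma\big(Y-\mathrm{oP}(\varepsilon\,|\,Y)\big)\quad\text{almost surely},$$ where $\mathrm{oP}(X\,|\,Y)=KY$.
   Context: $M^-$ denotes the Moore–Penrose generalized inverse of a matrix $M$. For random vectors $a,b$ in $L_2$, $\mathrm{oP}(a\,|\,b)$ denotes the best linear reconstruction of $a$ by means of $b$, i.e. the componentwise orthogonal $L_2$-projection of $a$ onto the closed linear span of the components of $b$ (for centered vectors, $\mathrm{oP}(a|b)=\mathrm{Cov}(a,b)\mathrm{Cov}(b)^-b$). $I_q$ is the $q\times q$ identity. *)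

theory Defs
  imports "HOL-Probability.Probability"
begin

text \<open>Moore--Penrose generalized inverse, defined by the four Penrose conditions
  (it exists and is unique for every real matrix).\<close>
definition mp_inverse :: "real^'n^'m \<Rightarrow> real^'m^'n" where
  "mp_inverse A = (THE G. A ** G ** A = A \<and> G ** A ** G = G \<and>
      transpose (A ** G) = A ** G \<and> transpose (G ** A) = G ** A)"

definition L2_vec :: "'a measure \<Rightarrow> ('a \<Rightarrow> real^'n) \<Rightarrow> bool" where
  "L2_vec M X \<longleftrightarrow> X \<in> borel_measurable M \<and>
     (\<forall>i. integrable M (\<lambda>\<omega>. (X \<omega> $ i)\<^sup>2))"

definition centered :: "'a measure \<Rightarrow> ('a \<Rightarrow> real^'n) \<Rightarrow> bool" where
  "centered M X \<longleftrightarrow> (\<forall>i. integral\<^sup>L M (\<lambda>\<omega>. X \<omega> $ i) = 0)"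

text \<open>Covariance matrix of a centered random vector: entries E[X_i X_j].\<close>
definition cov_mat :: "'a measure \<Rightarrow> ('a \<Rightarrow> real^'n) \<Rightarrow> real^'n^'n" where
  "cov_mat M X = (\<chi> i j. integral\<^sup>L M (\<lambda>\<omega>. X \<omega> $ i * X \<omega> $ j))"

text \<open>c is the componentwise orthogonal L2-projection of a onto the (finite-dimensional,
  hence closed) linear span of the components of b: each component of c lies
  (a.e.) in that span, and each component of a - c is L2-orthogonal to every
  component of b.\<close>
definition is_oP :: "'a measure \<Rightarrow> ('a \<Rightarrow> real^'m) \<Rightarrow> ('a \<Rightarrow> real^'n) \<Rightarrow> ('a \<Rightarrow> real^'m) \<Rightarrow> bool" where
  "is_oP M a b c \<longleftrightarrow> c \<in> borel_measurable M \<and>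
     (\<exists>W :: real^'n^'m. AE \<omega> in M. c \<omega> = W *v b \<omega>) \<and>
     (\<forall>i j. integral\<^sup>L M (\<lambda>\<omega>. (a \<omega> $ i - c \<omega> $ i) * b \<omega> $ j) = 0)"

text \<open>The best linear reconstruction oP(a|b) (a representative of the a.e.-unique projection).\<close>
definition oP :: "'a measure \<Rightarrow> ('a \<Rightarrow> real^'m) \<Rightarrow> ('a \<Rightarrow> real^'n) \<Rightarrow> ('a \<Rightarrow> real^'m)" where
  "oP M a b = (SOME c. is_oP M a b c)"

end

theory Submission
  imports Defs
begin

text \<open>
  The key
  analytic fact is that a matrix D annihilating the Gram matrix E[b b^T] kills b almost
  surely (D b has second moment D E[b b^T] D^T = 0).  Two consequences follow:
  (1) E[a b^T] H E[b b^T] = E[a b^T] for every generalized inverse H of E[b b^T], in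
      particular for the Moore--Penrose inverse, whatever the rank; and
  (2) any W solving the normal equations W E[b b^T] = E[a b^T] gives oP(a|b) = W b a.s.
  For the model, independence of X and eps makes them uncorrelated, so E[X Y^T] = Sigma Z^T,
  E[eps Y^T] = V and E[Y Y^T] = C.  By (1), K C = Sigma Z^T and Z^Sigma B = Sigma Z^T;
  so K and I - Z K solve the normal equations, and (2) yields the first two claims.
  The third follows from Z^Sigma Z K = K.
\<close>

lemma matrix_add_rdistrib: "((A::real^'n^'m) + B) ** C = A ** C + B ** C"
  by (simp add: matrix_matrix_mult_def vec_eq_iff sum.distrib[symmetric] algebra_simps)

lemma matrix_diff_rdistrib: "((A::real^'n^'m) - B) ** C = A ** C - B ** C"
  by (simp add: matrix_matrix_mult_def vec_eq_iff sum_subtractf[symmetric] algebra_simps)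

lemma matrix_diff_ldistrib: "(A::real^'n^'m) ** (B - C) = A ** B - A ** C"
  by (simp add: matrix_matrix_mult_def vec_eq_iff sum_subtractf[symmetric] algebra_simps)

lemma transpose_diff: "transpose ((A::real^'n^'m) - B) = transpose A - transpose B"
  by (simp add: transpose_def vec_eq_iff)

definition penrose :: "real^'n^'m \<Rightarrow> real^'m^'n \<Rightarrow> bool" where
  "penrose A G \<longleftrightarrow> A ** G ** A = A \<and> G ** A ** G = G \<and>
      transpose (A ** G) = A ** G \<and> transpose (G ** A) = G ** A"

text \<open>The Penrose conditions determine G uniquely (classical argument via A^T = A^T A G).\<close>
lemma penrose_unique:
  assumes "penrose A G1" "penrose A G2" shows "G1 = G2"
proof -
  note p1 = assms(1)[unfolded penrose_def] and p2 = assms(2)[unfolded penrose_def]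
  have At1: "transpose A = transpose A ** A ** G2"
  proof -
    have "transpose A = transpose (A ** G2 ** A)" using p2 by simp
    also have "\<dots> = transpose A ** transpose (A ** G2)" by (simp add: matrix_transpose_mul)
    also have "\<dots> = transpose A ** A ** G2" using p2 by (simp add: matrix_mul_assoc)
    finally show ?thesis .
  qed
  have At2: "transpose A = G1 ** A ** transpose A"
  proof -
    have "transpose A = transpose (A ** G1 ** A)" using p1 by simp
    also have "\<dots> = transpose (G1 ** A) ** transpose A" by (simp add: matrix_transpose_mul matrix_mul_assoc)
    also have "\<dots> = G1 ** A ** transpose A" using p1 by simp
    finally show ?thesis .
  qed
  have "G1 = G1 ** transpose (A ** G1)" using p1 by (simp add: matrix_mul_assoc)
  also have "\<dots> = G1 ** transpose G1 ** (transpose A ** A ** G2)"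
    using At1 by (simp add: matrix_transpose_mul matrix_mul_assoc)
  also have "\<dots> = G1 ** transpose (A ** G1) ** A ** G2" by (simp add: matrix_transpose_mul matrix_mul_assoc)
  also have "\<dots> = G1 ** A ** G2" using p1 by (simp add: matrix_mul_assoc)
  finally have e1: "G1 = G1 ** A ** G2" .
  have "G2 = transpose (G2 ** A) ** G2" using p2 by simp
  also have "\<dots> = (G1 ** A ** transpose A) ** transpose G2 ** G2"
    using At2 by (simp add: matrix_transpose_mul)
  also have "\<dots> = G1 ** A ** (transpose (G2 ** A) ** G2)"
    by (simp add: matrix_transpose_mul matrix_mul_assoc)
  also have "\<dots> = G1 ** A ** G2" using p2 by (simp add: matrix_mul_assoc)
  finally show ?thesis using e1 by simp
qed

text \<open>The orthogonal projection onto the column space of A, built from an orthonormal basis.\<close>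
lemma range_projection_exists:
  fixes A :: "real^'n^'m"
  obtains P :: "real^'m^'m" where "transpose P = P" "P ** P = P" "P ** A = A"
     "\<And>x. P *v x \<in> range ((*v) A)"
proof -
  have sub: "subspace (range ((*v) A))"
    using linear_subspace_image[OF matrix_vector_mul_linear[of A] subspace_UNIV] by simp
  obtain Bs where Bs: "Bs \<subseteq> range ((*v) A)" "pairwise orthogonal Bs"
      "\<And>x. x \<in> Bs \<Longrightarrow> norm x = 1" "independent Bs" "span Bs = range ((*v) A)"
    using orthonormal_basis_subspace[OF sub] by metis
  have fin: "finite Bs" using Bs(4) independent_imp_finite by blast
  define P :: "real^'m^'m" where "P = (\<chi> i j. \<Sum>b\<in>Bs. b$i * b$j)"
  have Pv: "P *v x = (\<Sum>b\<in>Bs. inner b x *\<^sub>R b)" for x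
    by (simp add: P_def vec_eq_iff matrix_vector_mult_def sum_component inner_vec_def
        sum_distrib_right sum_distrib_left mult_ac sum.swap[of _ Bs])
  have P_basis: "P *v b = b" if "b \<in> Bs" for b
  proof -
    have "P *v b = inner b b *\<^sub>R b + (\<Sum>c\<in>Bs - {b}. inner c b *\<^sub>R c)"
      using that fin by (simp add: Pv sum.remove)
    also have "(\<Sum>c\<in>Bs - {b}. inner c b *\<^sub>R c) = 0"
      using Bs(2) that by (intro sum.neutral) (auto simp: pairwise_def orthogonal_def)
    also have "inner b b = 1" using Bs(3)[OF that] by (simp add: norm_eq_1)
    finally show ?thesis by simp
  qed
  have P_fix: "P *v x = x" if "x \<in> range ((*v) A)" for x
  proof -
    have "x \<in> span Bs" using that Bs(5) by simp
    moreover have "subspace {x. (P - mat 1) *v x = 0}"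
      by (rule linear_subspace_kernel) simp
    ultimately have "(P - mat 1) *v x = 0"
      by (rule span_induct) (use P_basis in \<open>auto simp: matrix_vector_mult_diff_rdistrib\<close>)
    then show ?thesis by (simp add: matrix_vector_mult_diff_rdistrib)
  qed
  have P_range: "P *v x \<in> range ((*v) A)" for x
  proof -
    have "P *v x \<in> span Bs" unfolding Pv by (intro span_sum span_scale span_base)
    then show ?thesis using Bs(5) by simp
  qed
  have "transpose P = P" by (simp add: P_def transpose_def vec_eq_iff mult.commute)
  moreover have "P ** P = P"
    by (simp add: matrix_eq matrix_vector_mul_assoc[symmetric] P_fix P_range)
  moreover have "P ** A = A"
    by (simp add: matrix_eq matrix_vector_mul_assoc[symmetric] P_fix)
  ultimately show ?thesis using that P_range by blast
qed

text \<open>For symmetric A and the projection P onto its range, A + (I - P) is invertible: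
  a kernel vector x satisfies A x = 0 and x = P x in range A, hence x is orthogonal to itself.\<close>
lemma symmetric_shift_injective:
  fixes A P :: "real^'n^'n"
  assumes sym: "transpose A = A" and P: "P ** P = P" "P ** A = A" "\<And>x. P *v x \<in> range ((*v) A)"
  shows "inj ((*v) (A + mat 1 - P))"
proof -
  have "x = 0" if "(A + mat 1 - P) *v x = 0" for x
  proof -
    have e: "A *v x + x - P *v x = 0" using that
      by (simp add: matrix_vector_mult_diff_rdistrib matrix_vector_mult_add_rdistrib)
    then have "P *v (A *v x + x - P *v x) = 0" by simp
    then have Ax: "A *v x = 0"
      by (simp add: matrix_vector_mult_diff_distrib matrix_vector_right_distrib
          matrix_vector_mul_assoc P(1) P(2))
    then obtain y where y: "x = A *v y" using e P(3)[of x] by auto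
    have "inner x x = inner (x v* A) y" using y by (metis dot_lmul_matrix inner_commute)
    also have "x v* A = A *v x" by (metis sym vector_transpose_matrix)
    finally show "x = 0" using Ax by simp
  qed
  then show ?thesis by (simp add: vec.inj_iff_eq_0)
qed

text \<open>A symmetric matrix has a Moore--Penrose inverse, namely (A + I - P)^{-1} P.\<close>
lemma penrose_exists_symmetric:
  fixes A :: "real^'n^'n"
  assumes sym: "transpose A = A"
  shows "\<exists>G. penrose A G"
proof -
  obtain P :: "real^'n^'n" where P: "transpose P = P" "P ** P = P" "P ** A = A"
     "\<And>x. P *v x \<in> range ((*v) A)"
    using range_projection_exists by blast
  have AP: "A ** P = A"
    using arg_cong[OF P(3), of transpose] by (simp add: matrix_transpose_mul P(1) sym)
  define T where "T = A + mat 1 - P"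
  have TP: "T ** P = A" by (simp add: T_def matrix_diff_rdistrib matrix_add_rdistrib AP P(2))
  have PT: "P ** T = A" by (simp add: T_def matrix_diff_ldistrib matrix_add_ldistrib P(2) P(3))
  obtain N where NT: "N ** T = mat 1"
    using symmetric_shift_injective[OF sym P(2-4)] matrix_left_invertible_injective
    unfolding T_def by blast
  then have TN: "T ** N = mat 1" using matrix_left_right_inverse by blast
  have NP: "N ** P = P ** N"
  proof -
    have "N ** P = N ** P ** (T ** N)" by (simp add: TN)
    also have "\<dots> = N ** (P ** T) ** N" by (simp only: matrix_mul_assoc)
    also have "\<dots> = N ** (T ** P) ** N" by (simp only: PT TP)
    also have "\<dots> = (N ** T) ** P ** N" by (simp only: matrix_mul_assoc)
    finally show ?thesis by (simp add: NT)
  qed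
  define G where "G = N ** P"
  have AG: "A ** G = P"
  proof -
    have "A ** G = (T ** P) ** (N ** P)" by (simp only: TP G_def)
    also have "\<dots> = T ** (P ** N) ** P" by (simp only: matrix_mul_assoc)
    also have "\<dots> = (T ** N) ** (P ** P)" by (simp only: NP[symmetric] matrix_mul_assoc)
    finally show ?thesis by (simp add: TN P(2))
  qed
  have GA: "G ** A = P"
  proof -
    have "G ** A = (N ** P) ** (P ** T)" by (simp only: PT G_def)
    also have "\<dots> = N ** (P ** T)" by (metis P(2) matrix_mul_assoc)
    also have "\<dots> = N ** (T ** P)" by (simp only: PT TP)
    also have "\<dots> = (N ** T) ** P" by (simp only: matrix_mul_assoc)
    finally show ?thesis by (simp add: NT)
  qed
  have "G ** A ** G = G"
  proof -
    have "G ** A ** G = P ** G" by (simp only: GA)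
    also have "\<dots> = (P ** P) ** N" by (simp only: G_def NP matrix_mul_assoc)
    finally show ?thesis by (simp add: G_def NP P(2))
  qed
  then have "penrose A G" unfolding penrose_def using AG GA P(1,3) by (simp add: matrix_mul_assoc)
  then show ?thesis by blast
qed

lemma mp_inverse_symmetric:
  fixes A :: "real^'n^'n"
  assumes "transpose A = A"
  shows "penrose A (mp_inverse A)"
proof -
  obtain G where G: "penrose A G" using penrose_exists_symmetric[OF assms] by blast
  have "mp_inverse A = G"
    unfolding mp_inverse_def
  proof (rule the_equality)
    fix G' assume "A ** G' ** A = A \<and> G' ** A ** G' = G' \<and>
      transpose (A ** G') = A ** G' \<and> transpose (G' ** A) = G' ** A"
    then show "G' = G" using penrose_unique[OF _ G] unfolding penrose_def by blast
  qed (use G in \<open>simp only: penrose_def\<close>)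
  then show ?thesis using G by simp
qed

text \<open>Products of square-integrable real functions are integrable, since |f g| <= f^2 + g^2.\<close>
lemma integrable_product_of_squares:
  fixes f g :: "'a \<Rightarrow> real"
  assumes "f \<in> borel_measurable M" "g \<in> borel_measurable M"
    "integrable M (\<lambda>x. (f x)\<^sup>2)" "integrable M (\<lambda>x. (g x)\<^sup>2)"
  shows "integrable M (\<lambda>x. f x * g x)"
proof (rule Bochner_Integration.integrable_bound)
  show "integrable M (\<lambda>x. (f x)\<^sup>2 + (g x)\<^sup>2)" using assms by simp
  show "(\<lambda>x. f x * g x) \<in> borel_measurable M" using assms by simp
  have "\<bar>f x * g x\<bar> \<le> (f x)\<^sup>2 + (g x)\<^sup>2" for x
  proof -
    have "2 * \<bar>f x\<bar> * \<bar>g x\<bar> \<le> (f x)\<^sup>2 + (g x)\<^sup>2"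
      using sum_squares_bound[of "\<bar>f x\<bar>" "\<bar>g x\<bar>"] by simp
    moreover have "0 \<le> \<bar>f x\<bar> * \<bar>g x\<bar>" by simp
    ultimately have "\<bar>f x\<bar> * \<bar>g x\<bar> \<le> (f x)\<^sup>2 + (g x)\<^sup>2" by linarith
    then show ?thesis by (simp add: abs_mult)
  qed
  then show "AE x in M. norm (f x * g x) \<le> norm ((f x)\<^sup>2 + (g x)\<^sup>2)" by simp
qed

lemma L2_component_measurable: "L2_vec M X \<Longrightarrow> (\<lambda>\<omega>. X \<omega> $ i) \<in> borel_measurable M"
  unfolding L2_vec_def by (auto intro: measurable_compose[of X M borel])

lemma L2_product_integrable:
  "L2_vec M X \<Longrightarrow> L2_vec M Y \<Longrightarrow> integrable M (\<lambda>\<omega>. X \<omega> $ i * Y \<omega> $ j)"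
  by (intro integrable_product_of_squares L2_component_measurable) (auto simp: L2_vec_def)

lemma L2_component_integrable:
  "prob_space M \<Longrightarrow> L2_vec M X \<Longrightarrow> integrable M (\<lambda>\<omega>. X \<omega> $ i)"
  by (rule finite_measure.square_integrable_imp_integrable)
     (auto simp: L2_vec_def prob_space.finite_measure L2_component_measurable)

lemma L2_linear_image:
  assumes "L2_vec M X" shows "L2_vec M (\<lambda>\<omega>. (W::real^'n^'m) *v X \<omega>)"
  unfolding L2_vec_def
proof (intro conjI allI)
  show "(\<lambda>\<omega>. W *v X \<omega>) \<in> borel_measurable M"
    using assms unfolding L2_vec_def
    by (intro borel_measurable_continuous_on[where f="(*v) W"] linear_continuous_on
        matrix_vector_mul_bounded_linear) auto
  fix i
  have "((W *v X \<omega>) $ i)\<^sup>2 = (\<Sum>k\<in>UNIV. \<Sum>l\<in>UNIV. (W$i$k * W$i$l) * (X \<omega> $ k * X \<omega> $ l))" for \<omega>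
    by (simp add: matrix_vector_mult_def power2_eq_square sum_product mult_ac)
  moreover have "integrable M (\<lambda>\<omega>. \<Sum>k\<in>UNIV. \<Sum>l\<in>UNIV. (W$i$k * W$i$l) * (X \<omega> $ k * X \<omega> $ l))"
    using L2_product_integrable[OF assms assms] by simp
  ultimately show "integrable M (\<lambda>\<omega>. ((W *v X \<omega>) $ i)\<^sup>2)" by simp
qed

lemma L2_add:
  assumes "L2_vec M X" "L2_vec M Y" shows "L2_vec M (\<lambda>\<omega>. X \<omega> + Y \<omega> :: real^'n)"
  unfolding L2_vec_def
proof (intro conjI allI)
  show "(\<lambda>\<omega>. X \<omega> + Y \<omega>) \<in> borel_measurable M" using assms unfolding L2_vec_def by (intro borel_measurable_add) auto
  fix i
  have "((X \<omega> + Y \<omega>) $ i)\<^sup>2 = (X \<omega> $ i)\<^sup>2 + 2 * (X \<omega> $ i * Y \<omega> $ i) + (Y \<omega> $ i)\<^sup>2" for \<omega>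
    by (simp add: power2_eq_square algebra_simps)
  moreover have "integrable M (\<lambda>\<omega>. (X \<omega> $ i)\<^sup>2 + 2 * (X \<omega> $ i * Y \<omega> $ i) + (Y \<omega> $ i)\<^sup>2)"
    using assms L2_product_integrable[OF assms] by (simp add: L2_vec_def)
  ultimately show "integrable M (\<lambda>\<omega>. ((X \<omega> + Y \<omega>) $ i)\<^sup>2)" by simp
qed

definition cross_moment :: "'a measure \<Rightarrow> ('a \<Rightarrow> real^'m) \<Rightarrow> ('a \<Rightarrow> real^'n) \<Rightarrow> real^'n^'m" where
  "cross_moment M a b = (\<chi> i j. integral\<^sup>L M (\<lambda>\<omega>. a \<omega> $ i * b \<omega> $ j))"

lemma cov_mat_eq_cross_moment: "cov_mat M X = cross_moment M X X"
  by (simp add: cov_mat_def cross_moment_def)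

lemma cross_moment_transpose: "transpose (cross_moment M a b) = cross_moment M b a"
  by (simp add: cross_moment_def transpose_def vec_eq_iff mult.commute)

lemma cross_moment_linear_left:
  assumes "L2_vec M a" "L2_vec M b"
  shows "cross_moment M (\<lambda>\<omega>. (W::real^'m^'k) *v a \<omega>) b = W ** cross_moment M a b"
proof -
  have "integral\<^sup>L M (\<lambda>\<omega>. (W *v a \<omega>) $ i * b \<omega> $ j)
      = (\<Sum>k\<in>UNIV. W$i$k * integral\<^sup>L M (\<lambda>\<omega>. a \<omega> $ k * b \<omega> $ j))" for i j
    by (simp add: matrix_vector_mult_def sum_distrib_right mult.assoc
        Bochner_Integration.integral_sum L2_product_integrable assms)
  then show ?thesis by (simp add: cross_moment_def matrix_matrix_mult_def vec_eq_iff)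
qed

lemma cross_moment_linear_right:
  assumes "L2_vec M a" "L2_vec M b"
  shows "cross_moment M a (\<lambda>\<omega>. (W::real^'m^'k) *v b \<omega>) = cross_moment M a b ** transpose W"
  using arg_cong[OF cross_moment_linear_left[OF assms(2,1), of W], of transpose]
  by (simp add: matrix_transpose_mul cross_moment_transpose)

lemma cross_moment_add_left:
  assumes "L2_vec M a" "L2_vec M a'" "L2_vec M b"
  shows "cross_moment M (\<lambda>\<omega>. a \<omega> + a' \<omega>) b = cross_moment M a b + cross_moment M a' b"
  using assms by (simp add: cross_moment_def vec_eq_iff distrib_right L2_product_integrable)

lemma cross_moment_add_right:
  assumes "L2_vec M a" "L2_vec M b" "L2_vec M b'"
  shows "cross_moment M a (\<lambda>\<omega>. b \<omega> + b' \<omega>) = cross_moment M a b + cross_moment M a b'"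
  using assms by (simp add: cross_moment_def vec_eq_iff distrib_left L2_product_integrable)

text \<open>If D E[b b^T] = 0 then D b = 0 almost surely, because E[(D b)(D b)^T] = D E[b b^T] D^T = 0.\<close>
lemma AE_zero_of_gram_annihilator:
  assumes b: "L2_vec M b" and D: "(D::real^'n^'m) ** cross_moment M b b = 0"
  shows "AE \<omega> in M. D *v b \<omega> = 0"
proof -
  define d where "d = (\<lambda>\<omega>. D *v b \<omega>)"
  have Ld: "L2_vec M d" unfolding d_def by (rule L2_linear_image[OF b])
  have "cross_moment M d d = D ** cross_moment M b b ** transpose D"
    unfolding d_def
    by (simp add: cross_moment_linear_left cross_moment_linear_right L2_linear_image b matrix_mul_assoc)
  then have dd: "cross_moment M d d = 0" using D by simp
  have "AE \<omega> in M. d \<omega> $ i * d \<omega> $ i = 0" for i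
  proof -
    have "integral\<^sup>L M (\<lambda>\<omega>. d \<omega> $ i * d \<omega> $ i) = 0"
      using dd by (simp add: cross_moment_def vec_eq_iff)
    moreover have "integrable M (\<lambda>\<omega>. d \<omega> $ i * d \<omega> $ i)" by (intro L2_product_integrable Ld)
    ultimately show ?thesis by (subst (asm) integral_nonneg_eq_0_iff_AE) auto
  qed
  then have "AE \<omega> in M. \<forall>i\<in>UNIV. d \<omega> $ i * d \<omega> $ i = 0"
    by (intro AE_finite_allI) auto
  then show ?thesis by eventually_elim (simp add: d_def vec_eq_iff)
qed

text \<open>Range inclusion: E[a b^T] H E[b b^T] = E[a b^T] for any generalized inverse H of
  E[b b^T].  The matrix I - E[b b^T] H^T annihilates E[b b^T], so it kills b almost surely.\<close>
lemma cross_moment_ginverse: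
  assumes a: "L2_vec M a" and b: "L2_vec M b"
    and H: "cross_moment M b b ** H ** cross_moment M b b = cross_moment M b b"
  shows "cross_moment M a b ** H ** cross_moment M b b = cross_moment M a b"
proof -
  define G where "G = cross_moment M b b"
  have G_sym: "transpose G = G" unfolding G_def by (rule cross_moment_transpose)
  have "G ** transpose H ** G = G"
    using arg_cong[OF H, of transpose]
    by (simp add: matrix_transpose_mul G_sym matrix_mul_assoc flip: G_def)
  then have "(mat 1 - G ** transpose H) ** G = 0" by (simp add: matrix_diff_rdistrib)
  then have "AE \<omega> in M. (mat 1 - G ** transpose H) *v b \<omega> = 0"
    unfolding G_def by (rule AE_zero_of_gram_annihilator[OF b])
  then have "integral\<^sup>L M (\<lambda>\<omega>. a \<omega> $ i * ((mat 1 - G ** transpose H) *v b \<omega>) $ j) = 0" for i j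
    by (intro integral_eq_zero_AE) (auto elim!: eventually_mono)
  then have "cross_moment M a (\<lambda>\<omega>. (mat 1 - G ** transpose H) *v b \<omega>) = 0"
    by (simp add: cross_moment_def vec_eq_iff)
  moreover have "cross_moment M a (\<lambda>\<omega>. (mat 1 - G ** transpose H) *v b \<omega>)
      = cross_moment M a b - cross_moment M a b ** H ** G"
    by (simp add: cross_moment_linear_right a b transpose_diff matrix_transpose_mul G_sym
        matrix_diff_ldistrib matrix_mul_assoc)
  ultimately show ?thesis unfolding G_def by simp
qed

lemma cross_moment_mp_inverse:
  assumes "L2_vec M a" "L2_vec M b"
  shows "cross_moment M a b ** mp_inverse (cross_moment M b b) ** cross_moment M b b
    = cross_moment M a b"
  using mp_inverse_symmetric[OF cross_moment_transpose[of M b b]]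
  unfolding penrose_def by (blast intro: cross_moment_ginverse[OF assms])

lemma residual_cross_moment:
  assumes "L2_vec M a" "L2_vec M b"
  shows "integral\<^sup>L M (\<lambda>\<omega>. (a \<omega> $ i - (W *v b \<omega>) $ i) * b \<omega> $ j)
      = (cross_moment M a b - (W::real^'n^'m) ** cross_moment M b b) $ i $ j"
proof -
  have "integral\<^sup>L M (\<lambda>\<omega>. (a \<omega> $ i - (W *v b \<omega>) $ i) * b \<omega> $ j)
      = (cross_moment M a b - cross_moment M (\<lambda>\<omega>. W *v b \<omega>) b) $ i $ j"
    using assms by (simp add: left_diff_distrib L2_product_integrable L2_linear_image cross_moment_def)
  then show ?thesis by (simp add: cross_moment_linear_left assms)
qed

text \<open>A solution W of the normal equations W E[b b^T] = E[a b^T] represents the projection: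
  W b is a valid projection, and any two representations agree a.s. by the annihilator lemma.\<close>
lemma oP_normal_equations:
  assumes a: "L2_vec M a" and b: "L2_vec M b"
    and W: "(W::real^'n^'m) ** cross_moment M b b = cross_moment M a b"
  shows "AE \<omega> in M. oP M a b \<omega> = W *v b \<omega>"
proof -
  have "is_oP M a b (\<lambda>\<omega>. W *v b \<omega>)"
    unfolding is_oP_def
  proof (intro conjI allI exI[of _ W])
    show "(\<lambda>\<omega>. W *v b \<omega>) \<in> borel_measurable M"
      using L2_linear_image[OF b, of W] unfolding L2_vec_def by simp
  qed (simp_all add: residual_cross_moment a b W)
  then have "is_oP M a b (oP M a b)" unfolding oP_def by (rule someI[of "is_oP M a b"])
  then obtain W' :: "real^'n^'m" where meas: "oP M a b \<in> borel_measurable M"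
      and W': "AE \<omega> in M. oP M a b \<omega> = W' *v b \<omega>"
      and orth: "\<And>i j. integral\<^sup>L M (\<lambda>\<omega>. (a \<omega> $ i - oP M a b \<omega> $ i) * b \<omega> $ j) = 0"
    unfolding is_oP_def by blast
  have "(cross_moment M a b - W' ** cross_moment M b b) $ i $ j = 0" for i j
  proof -
    have "(\<lambda>\<omega>. oP M a b \<omega> $ i) \<in> borel_measurable M"
      using meas by (rule measurable_compose) simp
    then have "integral\<^sup>L M (\<lambda>\<omega>. (a \<omega> $ i - (W' *v b \<omega>) $ i) * b \<omega> $ j)
        = integral\<^sup>L M (\<lambda>\<omega>. (a \<omega> $ i - oP M a b \<omega> $ i) * b \<omega> $ j)"
      using W' L2_component_measurable[OF a] L2_component_measurable[OF b]
        L2_component_measurable[OF L2_linear_image[OF b]]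
      by (intro integral_cong_AE) (auto intro!: borel_measurable_times borel_measurable_diff elim!: eventually_mono)
    then show ?thesis by (simp add: orth residual_cross_moment a b)
  qed
  then have "(W' - W) ** cross_moment M b b = 0"
    using W by (simp add: matrix_diff_rdistrib vec_eq_iff)
  then have "AE \<omega> in M. (W' - W) *v b \<omega> = 0" by (rule AE_zero_of_gram_annihilator[OF b])
  with W' show ?thesis by eventually_elim (simp add: matrix_vector_mult_diff_rdistrib)
qed

lemma (in prob_space) indep_var_of_product_rule:
  assumes "random_variable S X" "random_variable T Y"
    and prod: "\<And>A B. A \<in> sets S \<Longrightarrow> B \<in> sets T \<Longrightarrow>
      prob (X -` A \<inter> Y -` B \<inter> space M) = prob (X -` A \<inter> space M) * prob (Y -` B \<inter> space M)"
  shows "indep_var S X T Y"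
proof -
  have stable: "Int_stable {F -` A \<inter> space M |A. A \<in> sets N}" for F :: "'a \<Rightarrow> 'c" and N
  proof (safe intro!: Int_stableI)
    fix A B assume "A \<in> sets N" "B \<in> sets N"
    then show "\<exists>C. (F -` A \<inter> space M) \<inter> (F -` B \<inter> space M) = F -` C \<inter> space M \<and> C \<in> sets N"
      by (intro exI[of _ "A \<inter> B"]) auto
  qed
  have "indep_set {X -` A \<inter> space M |A. A \<in> sets S} {Y -` B \<inter> space M |B. B \<in> sets T}"
  proof (rule indep_setI)
    fix a b assume "a \<in> {X -` A \<inter> space M |A. A \<in> sets S}" "b \<in> {Y -` B \<inter> space M |B. B \<in> sets T}"
    then obtain A B where "A \<in> sets S" "B \<in> sets T" "a = X -` A \<inter> space M" "b = Y -` B \<inter> space M"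
      by blast
    moreover have "a \<inter> b = X -` A \<inter> Y -` B \<inter> space M" using calculation by blast
    ultimately show "prob (a \<inter> b) = prob a * prob b" using prod by simp
  qed (use measurable_sets[OF assms(1)] measurable_sets[OF assms(2)] in blast)+
  then show ?thesis
    unfolding indep_var_eq using assms(1,2) by (intro conjI indep_set_sigma_sets stable)
qed

lemma uncorrelated_of_independent:
  fixes X :: "'a \<Rightarrow> real^'n" and eps :: "'a \<Rightarrow> real^'m"
  assumes "prob_space M" and X: "L2_vec M X" "centered M X" and E: "L2_vec M eps"
    and indep: "\<forall>S \<in> sets borel. \<forall>T \<in> sets borel.
       measure M (X -` S \<inter> eps -` T \<inter> space M)
         = measure M (X -` S \<inter> space M) * measure M (eps -` T \<inter> space M)"
  shows "cross_moment M X eps = 0"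
proof -
  interpret prob_space M by fact
  have "integral\<^sup>L M (\<lambda>\<omega>. X \<omega> $ i * eps \<omega> $ j) = 0" for i j
  proof -
    have "indep_var borel (\<lambda>\<omega>. X \<omega> $ i) borel (\<lambda>\<omega>. eps \<omega> $ j)"
    proof (rule indep_var_of_product_rule)
      fix A B :: "real set" assume A: "A \<in> sets borel" and B: "B \<in> sets borel"
      have "(\<lambda>x::real^'n. x $ i) -` A \<in> sets borel"
        using measurable_sets[OF _ A, of "\<lambda>x::real^'n. x $ i" borel] by simp
      moreover have "(\<lambda>y::real^'m. y $ j) -` B \<in> sets borel"
        using measurable_sets[OF _ B, of "\<lambda>y::real^'m. y $ j" borel] by simp
      ultimately show "prob ((\<lambda>\<omega>. X \<omega> $ i) -` A \<inter> (\<lambda>\<omega>. eps \<omega> $ j) -` B \<inter> space M)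
          = prob ((\<lambda>\<omega>. X \<omega> $ i) -` A \<inter> space M) * prob ((\<lambda>\<omega>. eps \<omega> $ j) -` B \<inter> space M)"
        using indep by (auto simp: vimage_def dest!: bspec)
    qed (simp_all add: L2_component_measurable X E)
    then have "integral\<^sup>L M (\<lambda>\<omega>. X \<omega> $ i * eps \<omega> $ j)
        = integral\<^sup>L M (\<lambda>\<omega>. X \<omega> $ i) * integral\<^sup>L M (\<lambda>\<omega>. eps \<omega> $ j)"
      by (rule indep_var_lebesgue_integral)
        (simp_all add: L2_component_integrable[OF prob_space_axioms] X E)
    then show ?thesis using X(2) by (simp add: centered_def)
  qed
  then show ?thesis by (simp add: cross_moment_def vec_eq_iff)
qed

lemma linear_model_moments:
  fixes X :: "'a \<Rightarrow> real^'p" and eps :: "'a \<Rightarrow> real^'q" and Z :: "real^'p^'q"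
  assumes X: "L2_vec M X" and E: "L2_vec M eps" and uncorr: "cross_moment M X eps = 0"
  defines "Y \<equiv> \<lambda>\<omega>. Z *v X \<omega> + eps \<omega>"
  shows "L2_vec M Y"
    and "cross_moment M X Y = cov_mat M X ** transpose Z"
    and "cross_moment M eps Y = cov_mat M eps"
    and "cross_moment M Y Y = Z ** cov_mat M X ** transpose Z + cov_mat M eps"
proof -
  have ZX: "L2_vec M (\<lambda>\<omega>. Z *v X \<omega>)" by (rule L2_linear_image[OF X])
  show Y: "L2_vec M Y" unfolding Y_def by (rule L2_add[OF ZX E])
  have "cross_moment M eps X = transpose (cross_moment M X eps)"
    by (simp add: cross_moment_transpose)
  then have "cross_moment M eps X = 0" by (simp add: uncorr transpose_def vec_eq_iff)
  then show "cross_moment M eps Y = cov_mat M eps"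
    by (simp add: Y_def cross_moment_add_right ZX E cross_moment_linear_right X cov_mat_eq_cross_moment)
  show XY: "cross_moment M X Y = cov_mat M X ** transpose Z"
    by (simp add: Y_def cross_moment_add_right ZX X E cross_moment_linear_right uncorr
        cov_mat_eq_cross_moment)
  have "cross_moment M Y Y = Z ** cross_moment M X Y + cross_moment M eps Y"
    unfolding Y_def by (simp add: cross_moment_add_left ZX E Y[unfolded Y_def] cross_moment_linear_left X)
  then show "cross_moment M Y Y = Z ** cov_mat M X ** transpose Z + cov_mat M eps"
    using XY \<open>cross_moment M eps Y = cov_mat M eps\<close> by (simp add: matrix_mul_assoc)
qed

theorem mainTheorem4:
  fixes M :: "'a measure"
    and X :: "'a \<Rightarrow> real^'p" and eps :: "'a \<Rightarrow> real^'q" and Z :: "real^'p^'q"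
  assumes "prob_space M"
    and "L2_vec M X" and "centered M X"
    and "L2_vec M eps" and "centered M eps"
    and indep: "\<forall>S \<in> sets borel. \<forall>T \<in> sets borel.
       measure M (X -` S \<inter> eps -` T \<inter> space M)
         = measure M (X -` S \<inter> space M) * measure M (eps -` T \<inter> space M)"
  defines "Y \<equiv> (\<lambda>\<omega>. Z *v X \<omega> + eps \<omega>)"
    and "\<Sigma> \<equiv> cov_mat M X" and "V \<equiv> cov_mat M eps"
  defines "B \<equiv> Z ** \<Sigma> ** transpose Z"
  defines "C \<equiv> B + V"
  defines "K \<equiv> \<Sigma> ** transpose Z ** mp_inverse C"
    and "Z\<^sub>\<Sigma> \<equiv> \<Sigma> ** transpose Z ** mp_inverse B"
  shows "(AE \<omega> in M. oP M eps Y \<omega> = (mat 1 - Z ** K) *v Y \<omega>)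
    \<and> (AE \<omega> in M. oP M X Y \<omega> = K *v Y \<omega>)
    \<and> (AE \<omega> in M. oP M X Y \<omega> = Z\<^sub>\<Sigma> *v (Y \<omega> - oP M eps Y \<omega>))"
proof -
  note X = assms(2) and E = assms(4)
  have "cross_moment M X eps = 0" by (rule uncorrelated_of_independent[OF assms(1-4) indep])
  from linear_model_moments[OF X E this, of Z, folded Y_def \<Sigma>_def V_def, folded B_def, folded C_def]
  have Y: "L2_vec M Y" and XY: "cross_moment M X Y = \<Sigma> ** transpose Z"
    and EY: "cross_moment M eps Y = V" and YY: "cross_moment M Y Y = C" by blast+
  have KC: "K ** C = \<Sigma> ** transpose Z"
    using cross_moment_mp_inverse[OF X Y] by (simp add: XY YY K_def)
  have "Z\<^sub>\<Sigma> ** B = \<Sigma> ** transpose Z"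
    using cross_moment_mp_inverse[OF X L2_linear_image[OF X, of Z]]
    by (simp add: cross_moment_linear_left cross_moment_linear_right L2_linear_image X
        matrix_mul_assoc cov_mat_eq_cross_moment \<Sigma>_def B_def Z\<^sub>\<Sigma>_def)
  then have ZSigma_ZK: "Z\<^sub>\<Sigma> ** (Z ** K) = K"
    by (simp add: K_def B_def matrix_mul_assoc)
  have "(mat 1 - Z ** K) ** C = V"
    by (simp add: matrix_diff_rdistrib KC flip: matrix_mul_assoc) (simp add: C_def B_def matrix_mul_assoc)
  then have oP_eps: "AE \<omega> in M. oP M eps Y \<omega> = (mat 1 - Z ** K) *v Y \<omega>"
    by (intro oP_normal_equations E Y) (simp add: YY EY)
  have oP_X: "AE \<omega> in M. oP M X Y \<omega> = K *v Y \<omega>"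
    by (intro oP_normal_equations X Y) (simp add: YY XY KC)
  have "AE \<omega> in M. oP M X Y \<omega> = Z\<^sub>\<Sigma> *v (Y \<omega> - oP M eps Y \<omega>)"
    using oP_eps oP_X
    by eventually_elim (simp add: matrix_vector_mult_diff_rdistrib matrix_vector_mul_assoc ZSigma_ZK)
  with oP_eps oP_X show ?thesis by blast
qed

end
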